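(* Let $G=(V,E)$ be a network with two sources $s_1,s_2$ and $n$ terminals $t_1,\dots,t_n$, such that for every $i\in\{1,2\}$ and $j\in\{1,\dots,n\}$ the max-flow from $s_i$ to $t_j$ is at least $1$ (i.e., there is a directed path from $s_i$ to $t_j$). Then there exists a linear network code (an assignment of coding vectors to all edges) over $\mathbb{F}=GF(2^m)$ such that every terminal $t_j$ can recover $X_1+X_2$ from the symbols on its incoming edges.
   Context: A network is a finite directed acyclic graph $G=(V,E)$ (parallel edges allowed) in which every edge has unit capacity and carries one symbol of a finite field $\mathbb{F}$ per use. Sources are vertices with no incoming edges; source $s_i$ holds $X_i\in\mathbb{F}$, the $X_i$ independent and uniformly distributed (unit entropy). Terminals are vertices with no outgoing edges. In a linear network code the symbol on an edge leaving a non-source vertex is an $\mathbb{F}$-linear combination of the symbols on the edges entering its tail, and the symbol on an edge leaving a source is a multiple of the source symbol. *)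

theory Defs
  imports Main
begin

text \<open>A network: finite vertex set V, finite set E of edge identifiers
  (so parallel edges are allowed), each edge e going from tail e to head e.
  Every edge has unit capacity and carries one field symbol.\<close>

definition arcs :: "'e set \<Rightarrow> ('e \<Rightarrow> 'v) \<Rightarrow> ('e \<Rightarrow> 'v) \<Rightarrow> ('v \<times> 'v) set" where
  "arcs E tail head = {(tail e, head e) | e. e \<in> E}"

definition in_edges :: "'e set \<Rightarrow> ('e \<Rightarrow> 'v) \<Rightarrow> 'v \<Rightarrow> 'e set" where
  "in_edges E head v = {e \<in> E. head e = v}"

definition out_edges :: "'e set \<Rightarrow> ('e \<Rightarrow> 'v) \<Rightarrow> 'v \<Rightarrow> 'e set" where
  "out_edges E tail v = {e \<in> E. tail e = v}"

definition is_network :: "'v set \<Rightarrow> 'e set \<Rightarrow> ('e \<Rightarrow> 'v) \<Rightarrow> ('e \<Rightarrow> 'v) \<Rightarrow> bool" where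
  "is_network V E tail head \<longleftrightarrow> finite V \<and> finite E \<and>
     (\<forall>e\<in>E. tail e \<in> V \<and> head e \<in> V) \<and> acyclic (arcs E tail head)"

definition sources :: "'v set \<Rightarrow> 'e set \<Rightarrow> ('e \<Rightarrow> 'v) \<Rightarrow> 'v set" where
  "sources V E head = {v \<in> V. in_edges E head v = {}}"

definition terminals :: "'v set \<Rightarrow> 'e set \<Rightarrow> ('e \<Rightarrow> 'v) \<Rightarrow> 'v set" where
  "terminals V E tail = {v \<in> V. out_edges E tail v = {}}"

text \<open>A linear network code for two sources s1 (holding X1) and s2 (holding X2),
  given by its global coding vectors g e = (a, b): edge e carries a*X1 + b*X2.\<close>
definition is_linear_code2 ::
  "'v set \<Rightarrow> 'e set \<Rightarrow> ('e \<Rightarrow> 'v) \<Rightarrow> ('e \<Rightarrow> 'v) \<Rightarrow> 'v \<Rightarrow> 'v \<Rightarrow> ('e \<Rightarrow> 'f::field \<times> 'f) \<Rightarrow> bool" where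
  "is_linear_code2 V E tail head s1 s2 g \<longleftrightarrow>
     (\<forall>e\<in>E.
        (tail e = s1 \<longrightarrow> (\<exists>k. g e = (k, 0))) \<and>
        (tail e = s2 \<longrightarrow> (\<exists>k. g e = (0, k))) \<and>
        (tail e \<notin> sources V E head \<longrightarrow>
           (\<exists>\<beta> :: 'e \<Rightarrow> 'f.
              g e = ((\<Sum>e'\<in>in_edges E head (tail e). \<beta> e' * fst (g e')),
                     (\<Sum>e'\<in>in_edges E head (tail e). \<beta> e' * snd (g e'))))))"

definition edge_symbol :: "('e \<Rightarrow> 'f::field \<times> 'f) \<Rightarrow> 'f \<Rightarrow> 'f \<Rightarrow> 'e \<Rightarrow> 'f" where
  "edge_symbol g x1 x2 e = fst (g e) * x1 + snd (g e) * x2"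

definition recovers_sum :: "'e set \<Rightarrow> ('e \<Rightarrow> 'v) \<Rightarrow> ('e \<Rightarrow> 'f::field \<times> 'f) \<Rightarrow> 'v \<Rightarrow> bool" where
  "recovers_sum E head g t \<longleftrightarrow>
     (\<exists>D :: ('e \<Rightarrow> 'f) \<Rightarrow> 'f. \<forall>x1 x2.
        D (\<lambda>e. if e \<in> in_edges E head t then edge_symbol g x1 x2 e else 0) = x1 + x2)"

end

theory Submission
  imports Defs
begin

text \<open>
  Label every vertex v by the pair of reachability indicators
  ([s1 reaches v], [s2 reaches v]) and let each edge carry the label of its tail,
  i.e. the symbol [s1 reaches v]*X1 + [s2 reaches v]*X2.  Every non-source vertex is
  reached from s_i exactly when the tail of one of its incoming edges is, so its
  label is a 0/1 combination of at most two incoming labels; hence the labelling is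
  a linear network code.  A terminal is reached from both sources, so its label is
  (1,1) and the same combination of its incoming symbols decodes X1 + X2.  The construction works over every
  field.
\<close>

lemma reachable_via_in_edge:
  assumes "v \<noteq> s"
  shows "(s, v) \<in> (arcs E tail head)\<^sup>* \<longleftrightarrow>
         (\<exists>e\<in>in_edges E head v. (s, tail e) \<in> (arcs E tail head)\<^sup>*)"
proof
  assume "(s, v) \<in> (arcs E tail head)\<^sup>*"
  then show "\<exists>e\<in>in_edges E head v. (s, tail e) \<in> (arcs E tail head)\<^sup>*"
  proof (cases rule: rtranclE)
    case base
    then show ?thesis using assms by simp
  next
    case (step u)
    then obtain e where "e \<in> E" "tail e = u" "head e = v"
      unfolding arcs_def by blast
    then show ?thesis using step unfolding in_edges_def by auto
  qed
next
  assume "\<exists>e\<in>in_edges E head v. (s, tail e) \<in> (arcs E tail head)\<^sup>*"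
  then obtain e where e: "e \<in> E" "head e = v" "(s, tail e) \<in> (arcs E tail head)\<^sup>*"
    unfolding in_edges_def by blast
  have "(tail e, head e) \<in> arcs E tail head" using e(1) unfolding arcs_def by blast
  with e show "(s, v) \<in> (arcs E tail head)\<^sup>*" by (metis rtrancl_into_rtrancl)
qed

lemma sum_indicator_coeffs:
  assumes "finite A" "S \<subseteq> A"
  shows "(\<Sum>e\<in>A. of_bool (e \<in> S) * f e) = (\<Sum>e\<in>S. f e :: 'f::field)"
proof -
  have "(\<Sum>e\<in>A. of_bool (e \<in> S) * f e) = (\<Sum>e\<in>A. if e \<in> S then f e else 0)"
    by (rule sum.cong) auto
  also have "\<dots> = (\<Sum>e\<in>A \<inter> S. f e)" using assms(1) by (simp add: sum.inter_restrict)
  also have "A \<inter> S = S" using assms(2) by blast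
  finally show ?thesis .
qed

text \<open>The indicator pair of "some element of A satisfies P / Q" is a linear
  combination of the indicator pairs of the individual elements: pick one witness
  for each property, or a single witness satisfying both.\<close>
lemma indicator_pair_combination:
  assumes "finite A"
  shows "\<exists>\<beta> :: 'e \<Rightarrow> 'f::field.
     ((of_bool (\<exists>e\<in>A. P e) :: 'f), (of_bool (\<exists>e\<in>A. Q e) :: 'f)) =
     ((\<Sum>e\<in>A. \<beta> e * of_bool (P e)), (\<Sum>e\<in>A. \<beta> e * of_bool (Q e)))"
proof -
  have witnesses: "\<exists>S\<subseteq>A. (\<Sum>e\<in>S. of_bool (P e) :: 'f) = of_bool (\<exists>e\<in>A. P e) \<and>
                          (\<Sum>e\<in>S. of_bool (Q e) :: 'f) = of_bool (\<exists>e\<in>A. Q e)"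
  proof -
    consider (both) c where "c \<in> A" "P c" "Q c"
      | (two) c d where "c \<in> A" "d \<in> A" "P c" "Q d" "\<not> Q c" "\<not> P d"
      | (onlyP) c where "c \<in> A" "P c" "\<forall>e\<in>A. \<not> Q e"
      | (onlyQ) d where "d \<in> A" "Q d" "\<forall>e\<in>A. \<not> P e"
      | (none) "\<forall>e\<in>A. \<not> P e" "\<forall>e\<in>A. \<not> Q e"
      by blast
    then show ?thesis
    proof cases
      case both
      then show ?thesis by (intro exI[of _ "{c}"]) auto
    next
      case two
      then have "c \<noteq> d" by auto
      with two show ?thesis by (intro exI[of _ "{c, d}"]) auto
    next
      case onlyP
      then show ?thesis by (intro exI[of _ "{c}"]) auto
    next
      case onlyQ
      then show ?thesis by (intro exI[of _ "{d}"]) auto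
    next
      case none
      then show ?thesis by (intro exI[of _ "{}"]) auto
    qed
  qed
  then obtain S where "S \<subseteq> A"
    and "(\<Sum>e\<in>S. of_bool (P e) :: 'f) = of_bool (\<exists>e\<in>A. P e)"
    and "(\<Sum>e\<in>S. of_bool (Q e) :: 'f) = of_bool (\<exists>e\<in>A. Q e)"
    by blast
  then show ?thesis
    by (intro exI[of _ "\<lambda>e. of_bool (e \<in> S)"])
       (simp add: sum_indicator_coeffs[OF assms])
qed

lemma linear_code_from_vertex_labels:
  fixes r :: "'v \<Rightarrow> 'f::field \<times> 'f"
  assumes "sources V E head = {s1, s2}"
    and "\<exists>k. r s1 = (k, 0)" and "\<exists>k. r s2 = (0, k)"
    and "\<And>v. v \<notin> {s1, s2} \<Longrightarrow> \<exists>\<beta> :: 'e \<Rightarrow> 'f.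
           r v = ((\<Sum>e\<in>in_edges E head v. \<beta> e * fst (r (tail e))),
                  (\<Sum>e\<in>in_edges E head v. \<beta> e * snd (r (tail e))))"
  shows "is_linear_code2 V E tail head s1 s2 (\<lambda>e. r (tail e))"
  using assms unfolding is_linear_code2_def by auto

lemma recovers_sum_of_combination:
  fixes g :: "'e \<Rightarrow> 'f::field \<times> 'f"
  assumes "(\<Sum>e\<in>in_edges E head t. \<beta> e * fst (g e)) = 1"
    and "(\<Sum>e\<in>in_edges E head t. \<beta> e * snd (g e)) = 1"
  shows "recovers_sum E head g t"
  unfolding recovers_sum_def
proof (intro exI[of _ "\<lambda>y. \<Sum>e\<in>in_edges E head t. \<beta> e * y e"] allI)
  fix x1 x2 :: 'f
  let ?I = "in_edges E head t"
  have "(\<Sum>e\<in>?I. \<beta> e * (if e \<in> ?I then edge_symbol g x1 x2 e else 0))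
      = (\<Sum>e\<in>?I. (\<beta> e * fst (g e)) * x1 + (\<beta> e * snd (g e)) * x2)"
    by (rule sum.cong) (auto simp: edge_symbol_def algebra_simps)
  also have "\<dots> = x1 + x2"
    by (simp add: sum.distrib sum_distrib_right[symmetric] assms)
  finally show "(\<Sum>e\<in>?I. \<beta> e * (if e \<in> ?I then edge_symbol g x1 x2 e else 0)) = x1 + x2" .
qed

definition reach_label :: "('v \<times> 'v) set \<Rightarrow> 'v \<Rightarrow> 'v \<Rightarrow> 'v \<Rightarrow> 'f::field \<times> 'f" where
  "reach_label R s1 s2 v = (of_bool ((s1, v) \<in> R\<^sup>*), of_bool ((s2, v) \<in> R\<^sup>*))"

lemma reach_label_combination:
  assumes "finite E" "v \<noteq> s1" "v \<noteq> s2"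
  shows "\<exists>\<beta> :: 'e \<Rightarrow> 'f::field.
     reach_label (arcs E tail head) s1 s2 v =
       ((\<Sum>e\<in>in_edges E head v. \<beta> e * fst (reach_label (arcs E tail head) s1 s2 (tail e) :: 'f \<times> 'f)),
        (\<Sum>e\<in>in_edges E head v. \<beta> e * snd (reach_label (arcs E tail head) s1 s2 (tail e) :: 'f \<times> 'f)))"
proof -
  let ?R = "arcs E tail head"
  have "finite (in_edges E head v)" using assms(1) unfolding in_edges_def by simp
  moreover have "reach_label ?R s1 s2 v =
      ((of_bool (\<exists>e\<in>in_edges E head v. (s1, tail e) \<in> ?R\<^sup>*) :: 'f),
       (of_bool (\<exists>e\<in>in_edges E head v. (s2, tail e) \<in> ?R\<^sup>*) :: 'f))"
    using reachable_via_in_edge[OF assms(2), of E tail head]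
      reachable_via_in_edge[OF assms(3), of E tail head]
    unfolding reach_label_def by simp
  ultimately show ?thesis
    using indicator_pair_combination[of "in_edges E head v"
        "\<lambda>e. (s1, tail e) \<in> ?R\<^sup>*" "\<lambda>e. (s2, tail e) \<in> ?R\<^sup>*"]
    unfolding reach_label_def by simp
qed

lemma source_unreachable:
  assumes "s \<in> sources V E head" "u \<noteq> s"
  shows "(u, s) \<notin> (arcs E tail head)\<^sup>*"
  using assms reachable_via_in_edge[of s u E tail head] unfolding sources_def by auto

theorem theorem1:
  fixes V :: "'v set" and E :: "'e set" and tail head :: "'e \<Rightarrow> 'v"
    and s1 s2 :: 'v and t :: "nat \<Rightarrow> 'v" and n m :: nat
  assumes "is_network V E tail head"
    and "s1 \<noteq> s2"
    and "sources V E head = {s1, s2}"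
    and "terminals V E tail = t ` {1..n}"
    and "inj_on t {1..n}"
    and "\<forall>s\<in>{s1, s2}. \<forall>j\<in>{1..n}. (s, t j) \<in> (arcs E tail head)\<^sup>+"
    and "card (UNIV :: ('f::{field,finite}) set) = 2 ^ m"
  shows "\<exists>g :: 'e \<Rightarrow> 'f \<times> 'f. is_linear_code2 V E tail head s1 s2 g \<and>
           (\<forall>j\<in>{1..n}. recovers_sum E head g (t j))"
proof -
  let ?R = "arcs E tail head"
  let ?r = "reach_label ?R s1 s2 :: 'v \<Rightarrow> 'f \<times> 'f"
  have finite: "finite E" and acyclic: "acyclic ?R"
    using assms(1) unfolding is_network_def by auto
  have combination: "\<exists>\<beta> :: 'e \<Rightarrow> 'f. ?r v =
      ((\<Sum>e\<in>in_edges E head v. \<beta> e * fst (?r (tail e))),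
       (\<Sum>e\<in>in_edges E head v. \<beta> e * snd (?r (tail e))))" if "v \<notin> {s1, s2}" for v
    using that by (intro reach_label_combination[OF finite]) auto
  have "(s2, s1) \<notin> ?R\<^sup>*" "(s1, s2) \<notin> ?R\<^sup>*"
    using source_unreachable[of s1 V E head s2] source_unreachable[of s2 V E head s1]
      assms(2,3) by auto
  then have code: "is_linear_code2 V E tail head s1 s2 (\<lambda>e. ?r (tail e))"
    by (intro linear_code_from_vertex_labels[OF assms(3) _ _ combination])
       (auto simp: reach_label_def)
  have "recovers_sum E head (\<lambda>e. ?r (tail e)) (t j)" if j: "j \<in> {1..n}" for j
  proof -
    have reached: "(s1, t j) \<in> ?R\<^sup>+" "(s2, t j) \<in> ?R\<^sup>+" using assms(6) j by auto
    then have "t j \<notin> {s1, s2}" using acyclic unfolding acyclic_def by auto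
    then obtain \<beta> :: "'e \<Rightarrow> 'f" where "?r (t j) =
        ((\<Sum>e\<in>in_edges E head (t j). \<beta> e * fst (?r (tail e))),
         (\<Sum>e\<in>in_edges E head (t j). \<beta> e * snd (?r (tail e))))"
      using combination by blast
    moreover have "?r (t j) = (1, 1)"
      using reached unfolding reach_label_def by (auto dest: trancl_into_rtrancl)
    ultimately show ?thesis by (intro recovers_sum_of_combination[where \<beta> = \<beta>]) auto
  qed
  with code show ?thesis by blast
qed

end
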